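(* For $n\ge1$ let $a(n)$ be the number of nonempty words $\omega$ such that $\omega\omega$ is a suffix of $\mathbb{T}[1,n]$ and $\omega\omega$ is not a factor of $\mathbb{T}[1,n-1]$. For $n<14$, $a(n)=1$ if and only if $n\in\{8,10\}$. For $n\geq14$, let $m$ be such that $2t_{m-1}\leq n<2t_{m}$; then $m\geq4$ and $a(n)=1$ if and only if $$n\in\{2t_{m-1},\dots,t_{m}+2t_{m-3}-1\}\cup\{2t_{m}-t_{m-1},\dots,\tfrac{3t_{m}+t_{m-2}-3}{2}\}.$$
   Context: The Tribonacci sequence $\mathbb{T}=x_1x_2x_3\cdots$ is the fixed point (infinite word starting with $a$) of the substitution $\sigma(a)=ab$, $\sigma(b)=ac$, $\sigma(c)=a$ over $\{a,b,c\}$. For $n\ge1$, $\mathbb{T}[1,n]=x_1\cdots x_n$ is its prefix of length $n$ (and $\mathbb{T}[1,0]$ is the empty word). The Tribonacci numbers are $t_m=|\sigma^m(a)|$ for $m\ge0$, with $t_{-2}=0$, $t_{-1}=1$; thus $t_0=1,t_1=2,t_2=4$ and $t_m=t_{m-1}+t_{m-2}+t_{m-3}$. *)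

theory Defs
  imports Main "HOL-Library.Sublist"
begin

datatype letter = A | B | C

fun sigma_letter :: "letter \<Rightarrow> letter list" where
  "sigma_letter A = [A, B]"
| "sigma_letter B = [A, C]"
| "sigma_letter C = [A]"

definition sigma :: "letter list \<Rightarrow> letter list" where
  "sigma w = concat (map sigma_letter w)"

definition trib :: "nat \<Rightarrow> nat" where
  "trib m = length ((sigma ^^ m) [A])"

(* i-th letter (1-based) of the Tribonacci word: sigma^i(a) has length > i-1,
   and sigma^k(a) is a prefix of sigma^(k+1)(a), so this is the fixed point. *)
definition tword :: "nat \<Rightarrow> letter" where
  "tword i = (sigma ^^ i) [A] ! (i - 1)"

definition tpref :: "nat \<Rightarrow> letter list" where
  "tpref n = map tword [1..<n+1]"

definition acount :: "nat \<Rightarrow> nat" where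
  "acount n = card {w. w \<noteq> [] \<and> suffix (w @ w) (tpref n) \<and> \<not> sublist (w @ w) (tpref (n - 1))}"

end

theory Submission
  imports Defs
begin

text \<open>Positions are counted from \<open>0\<close>. Everything is governed by \<open>lcp j\<close>, the length of the
  longest common prefix of \<open>T\<close> and its suffix starting at \<open>j\<close>. Desubstitution by \<open>\<sigma>\<close>
  gives \<open>lcp (sigma_pos j) = sigma_pos (lcp j) + 1\<close>, hence \<open>lcp t(k) = t(0) + \<dots> + t(k-1)\<close>,
  the bound \<open>j + lcp j \<le> t(0) + \<dots> + t(k-1)\<close> for \<open>0 < j < t(k)\<close>, and the few positions below
  \<open>t(k+3)\<close> with large \<open>lcp\<close>. Since left special factors of \<open>T\<close> are prefixes, extending two
  occurrences of a factor to the left until they differ turns them into occurrences of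
  prefixes. So the factor of length \<open>s\<close> ending at \<open>n\<close> is new iff no \<open>0 < j \<le> n - s\<close> has
  \<open>lcp j \<ge> n - j\<close>, i.e. iff \<open>n < s + t(k)\<close> when \<open>t(0) + \<dots> + t(k-1) < n \<le> t(0) + \<dots> + t(k)\<close>,
  and a square suffix is a pair of prefix occurrences at distance its period. For
  \<open>t(0) + \<dots> + t(k+2) < n \<le> t(0) + \<dots> + t(k+3)\<close> this leaves the periods \<open>t(k+3)\<close>, \<open>t(k)\<close>
  and \<open>t(k+1) + t(k)\<close>, each for an interval of \<open>n\<close>, and the intervals are disjoint.\<close>

subsection \<open>The substitution and the Tribonacci numbers\<close>

lemma sigma_Nil [simp]: "sigma [] = []"
  by (simp add: sigma_def)

lemma sigma_Cons [simp]: "sigma (a # w) = sigma_letter a @ sigma w"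
  by (simp add: sigma_def)

lemma sigma_append [simp]: "sigma (u @ v) = sigma u @ sigma v"
  by (simp add: sigma_def)

lemma sigma_mono_prefix: "prefix u v \<Longrightarrow> prefix (sigma u) (sigma v)"
  by (auto simp: prefix_def)

lemma length_sigma_ge: "length w \<le> length (sigma w)"
proof (induction w)
  case (Cons a w)
  then show ?case by (cases a) auto
qed simp

definition tblock :: "nat \<Rightarrow> letter list" where
  "tblock k = (sigma ^^ k) [A]"

lemma tblock_Suc: "tblock (Suc k) = sigma (tblock k)"
  by (simp add: tblock_def)

lemma tblock_3: "tblock 3 = [A, B, A, C, A, B, A]"
  by (simp add: tblock_def numeral_eq_Suc)

lemma tblock_rec: "tblock (k + 3) = tblock (k + 2) @ tblock (k + 1) @ tblock k"
proof (induction k)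
  case 0
  show ?case by (simp add: tblock_def numeral_eq_Suc)
next
  case (Suc k)
  have "tblock (Suc k + 3) = sigma (tblock (k + 3))"
    using tblock_Suc[of "k + 3"] by simp
  also have "\<dots> = tblock (Suc k + 2) @ tblock (Suc k + 1) @ tblock (Suc k)"
    by (simp add: Suc tblock_Suc)
  finally show ?case .
qed

lemma tblock_prefix_Suc: "prefix (tblock k) (tblock (Suc k))"
proof (induction k)
  case (Suc k)
  then show ?case by (simp add: tblock_Suc sigma_mono_prefix)
qed (simp add: tblock_def)

lemma tblock_prefix: "k \<le> k' \<Longrightarrow> prefix (tblock k) (tblock k')"
  by (induction k' rule: dec_induct) (auto intro: prefix_order.trans[OF _ tblock_prefix_Suc])

lemma trib_eq_length: "trib k = length (tblock k)"
  by (simp add: trib_def tblock_def)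

lemma trib_rec: "trib (k + 3) = trib (k + 2) + trib (k + 1) + trib k"
  by (simp add: trib_eq_length tblock_rec)

lemma trib_small [simp]:
  "trib 0 = 1" "trib 1 = 2" "trib 2 = 4" "trib 3 = 7"
  "trib (Suc 0) = 2" "trib (Suc (Suc 0)) = 4" "trib (Suc (Suc (Suc 0))) = 7"
  by (simp_all add: trib_eq_length tblock_3 numeral_3_eq_3 numeral_2_eq_2)
    (simp_all add: tblock_def)

lemma trib_pos: "0 < trib k"
proof (induction k)
  case (Suc k)
  then show ?case
    using length_sigma_ge[of "tblock k"] unfolding trib_eq_length tblock_Suc by linarith
qed simp

lemma trib_Suc_Suc_ge: "trib (k + 1) + trib k \<le> trib (k + 2)"
proof (cases k)
  case (Suc i)
  then show ?thesis using trib_rec[of i] by (simp add: numeral_eq_Suc)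
qed simp

lemma strict_mono_trib: "strict_mono trib"
proof (rule strict_mono_Suc_iff[THEN iffD2], intro allI)
  fix k
  show "trib k < trib (Suc k)"
    using trib_Suc_Suc_ge[of "k - 1"] trib_pos[of "k - 1"] by (cases k) auto
qed

lemma trib_ge: "Suc k \<le> trib k"
proof (induction k)
  case (Suc k)
  then show ?case using strict_monoD[OF strict_mono_trib, of k "Suc k"] by simp
qed simp

lemma trib_Suc_le_double: "trib (Suc k) \<le> 2 * trib k"
proof (cases "k \<ge> 2")
  case True
  then obtain i where "k = i + 2" by (metis add.commute le_Suc_ex)
  then show ?thesis using trib_rec[of i] trib_Suc_Suc_ge[of i] by (simp add: numeral_eq_Suc)
qed (auto simp: less_2_cases_iff not_le)

lemma trib_Suc_ge_three_halves: "3 * trib k \<le> 2 * trib (Suc k)"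
proof (cases "k \<ge> 2")
  case True
  then obtain i where "k = i + 2" by (metis add.commute le_Suc_ex)
  then show ?thesis
    using trib_rec[of i] trib_Suc_le_double[of "i + 1"] by (simp add: numeral_eq_Suc)
qed (auto simp: less_2_cases_iff not_le)

definition tlet :: "nat \<Rightarrow> letter" where
  "tlet i = tword (Suc i)"

lemma tlet_tblock: "i < trib k \<Longrightarrow> tlet i = tblock k ! i"
proof -
  assume i: "i < trib k"
  have "tlet i = tblock (Suc i) ! i"
    by (simp add: tlet_def tword_def tblock_def)
  moreover have "i < length (tblock (Suc i))"
    using trib_ge[of "Suc i"] by (simp add: trib_eq_length)
  ultimately show ?thesis
    using i tblock_prefix[of k "Suc i"] tblock_prefix[of "Suc i" k]
    by (cases "k \<le> Suc i") (auto simp: trib_eq_length prefix_def nth_append)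
qed

lemma tpref_eq_map: "tpref n = map tlet [0..<n]"
proof -
  have "[1..<n + 1] = map Suc [0..<n]"
    by (simp add: map_Suc_upt)
  then show ?thesis
    by (simp add: tpref_def tlet_def)
qed

lemma length_tpref [simp]: "length (tpref n) = n"
  by (simp add: tpref_eq_map)

lemma nth_tpref [simp]: "i < n \<Longrightarrow> tpref n ! i = tlet i"
  by (simp add: tpref_eq_map)

lemma tpref_Suc: "tpref (Suc n) = tpref n @ [tlet n]"
  by (simp add: tpref_eq_map)

lemma tpref_add: "tpref (a + b) = tpref a @ map tlet [a..<a + b]"
  by (simp add: tpref_eq_map upt_add_eq_append[of 0 a b])

lemma drop_tpref: "a \<le> n \<Longrightarrow> drop a (tpref n) = map tlet [a..<n]"
  by (simp add: tpref_eq_map drop_map)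

lemma tpref_take_tblock: "n \<le> trib k \<Longrightarrow> tpref n = take n (tblock k)"
  by (intro nth_equalityI) (auto simp: trib_eq_length tlet_tblock)

lemma tpref_trib: "tpref (trib k) = tblock k"
  using tpref_take_tblock[of "trib k" k] by (simp add: trib_eq_length)

lemma tlet_small:
  "tlet 0 = A" "tlet (Suc 0) = B" "tlet 2 = A" "tlet 3 = C" "tlet 4 = A" "tlet 5 = B" "tlet 6 = A"
  by (simp_all add: tlet_tblock[where k = 3] tblock_3)

lemma tlet_of_append:
  "tpref n = u @ v \<Longrightarrow> i < length v \<Longrightarrow> tlet (length u + i) = v ! i"
  by (metis length_append length_tpref nat_add_left_cancel_less nth_append_length_plus nth_tpref)

subsection \<open>Desubstitution\<close>

text \<open>Since \<open>\<sigma>(T) = T\<close>, the image of the letter at position \<open>N\<close> starts at position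
  \<open>sigma_pos N\<close>; every \<open>A\<close> of \<open>T\<close> sits at such a position.\<close>

definition sigma_pos :: "nat \<Rightarrow> nat" where
  "sigma_pos N = length (sigma (tpref N))"

lemma tpref_sigma_pos: "tpref (sigma_pos N) = sigma (tpref N)"
proof -
  have pref: "prefix (sigma (tpref N)) (tblock (Suc N))"
    using sigma_mono_prefix[OF take_is_prefix[of N "tblock N"]]
    by (simp add: tblock_Suc tpref_take_tblock[OF Suc_leD[OF trib_ge]])
  then have "sigma_pos N \<le> trib (Suc N)"
    unfolding sigma_pos_def trib_eq_length by (rule prefix_length_le)
  moreover have "take (sigma_pos N) (tblock (Suc N)) = sigma (tpref N)"
    using pref by (auto simp: sigma_pos_def prefix_def)
  ultimately show ?thesis
    by (simp add: tpref_take_tblock)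
qed

lemma sigma_pos_0 [simp]: "sigma_pos 0 = 0"
  by (simp add: sigma_pos_def tpref_eq_map)

lemma sigma_pos_Suc: "sigma_pos (Suc N) = sigma_pos N + length (sigma_letter (tlet N))"
  by (simp add: sigma_pos_def tpref_Suc)

lemma sigma_pos_Suc_gt: "sigma_pos N < sigma_pos (Suc N)"
  by (cases "tlet N") (simp_all add: sigma_pos_Suc)

lemma strict_mono_sigma_pos: "strict_mono sigma_pos"
  by (simp add: strict_mono_Suc_iff sigma_pos_Suc_gt)

lemma sigma_pos_add_ge: "sigma_pos a + i \<le> sigma_pos (a + i)"
proof (induction i)
  case (Suc i)
  then show ?case using sigma_pos_Suc_gt[of "a + i"] by simp
qed simp

lemma sigma_pos_gt: "1 \<le> N \<Longrightarrow> N < sigma_pos N"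
proof (induction N)
  case (Suc N)
  show ?case
  proof (cases N)
    case 0
    then show ?thesis by (simp add: sigma_pos_Suc tlet_small)
  next
    case (Suc M)
    then show ?thesis using Suc.IH sigma_pos_Suc_gt[of N] by simp
  qed
qed simp

lemma sigma_pos_trib: "sigma_pos (trib k) = trib (Suc k)"
  unfolding sigma_pos_def tpref_trib by (simp add: trib_eq_length tblock_Suc)

lemma map_tlet_sigma_pos:
  "a \<le> b \<Longrightarrow> map tlet [sigma_pos a..<sigma_pos b] = sigma (map tlet [a..<b])"
proof -
  assume "a \<le> b"
  then obtain c d where c: "b = a + c" and d: "sigma_pos b = sigma_pos a + d"
    using strict_mono_less_eq[OF strict_mono_sigma_pos] le_Suc_ex by metis
  have "tpref (sigma_pos b) = tpref (sigma_pos a) @ map tlet [sigma_pos a..<sigma_pos b]"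
    using tpref_add[of "sigma_pos a" d] d by simp
  moreover have "tpref (sigma_pos b) = tpref (sigma_pos a) @ sigma (map tlet [a..<b])"
    using tpref_add[of a c] c by (simp add: tpref_sigma_pos)
  ultimately show ?thesis by simp
qed

fun next_letter :: "letter \<Rightarrow> letter" where
  "next_letter A = B" | "next_letter B = C" | "next_letter C = A"

lemma next_letter_inj: "next_letter a = next_letter b \<longleftrightarrow> a = b"
  by (cases a; cases b) auto

text \<open>For \<open>a \<in> {A, B}\<close> the letter after \<open>sigma_pos N\<close> is the second letter of \<open>\<sigma>(a)\<close>; for
  \<open>a = C\<close> it is the first letter \<open>A\<close> of the next image.\<close>

lemma tlet_sigma_pos: "tlet (sigma_pos N) = A"
  and tlet_Suc_sigma_pos: "tlet (sigma_pos N + 1) = next_letter (tlet N)"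
proof -
  have e: "tpref (sigma_pos (Suc (Suc N)))
      = sigma (tpref N) @ sigma_letter (tlet N) @ sigma_letter (tlet (Suc N))"
    by (simp add: tpref_sigma_pos tpref_Suc)
  have l: "length (sigma (tpref N)) = sigma_pos N"
    by (simp add: sigma_pos_def)
  show "tlet (sigma_pos N) = A"
    using tlet_of_append[OF e, of 0] l by (cases "tlet N") auto
  show "tlet (sigma_pos N + 1) = next_letter (tlet N)"
    using tlet_of_append[OF e, of 1] l by (cases "tlet N"; cases "tlet (Suc N)") auto
qed

lemma tlet_before_sigma_pos:
  "1 \<le> N \<Longrightarrow> tlet (sigma_pos N - 1) = next_letter (tlet (N - 1))"
proof -
  assume "1 \<le> N"
  then obtain M where M: "N = Suc M" by (cases N) auto
  have e: "tpref (sigma_pos (Suc M)) = sigma (tpref M) @ sigma_letter (tlet M)"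
    by (simp add: tpref_sigma_pos tpref_Suc)
  have l: "length (sigma (tpref M)) = sigma_pos M"
    by (simp add: sigma_pos_def)
  show ?thesis
    using M tlet_of_append[OF e, of 0] tlet_of_append[OF e, of 1] l
    by (cases "tlet M") (simp_all add: sigma_pos_Suc)
qed

lemma sigma_pos_cover:
  obtains N where "p = sigma_pos N \<or> (p = sigma_pos N + 1 \<and> tlet N \<noteq> C)"
proof -
  define N where "N = (LEAST N. p < sigma_pos (Suc N))"
  have "p < sigma_pos (Suc N)"
    unfolding N_def by (rule LeastI[of _ p]) (use sigma_pos_gt[of "Suc p"] in simp)
  moreover have "\<not> p < sigma_pos N"
  proof (cases N)
    case (Suc M)
    then have "M < (LEAST N. p < sigma_pos (Suc N))"
      by (simp add: N_def)
    then show ?thesis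
      using not_less_Least Suc by blast
  qed simp
  ultimately have "p = sigma_pos N \<or> (p = sigma_pos N + 1 \<and> tlet N \<noteq> C)"
    by (cases "tlet N") (auto simp: sigma_pos_Suc)
  then show thesis
    by (rule that)
qed

lemma tlet_eq_A_iff: "tlet p = A \<longleftrightarrow> (\<exists>N. p = sigma_pos N)"
proof -
  obtain N where "p = sigma_pos N \<or> (p = sigma_pos N + 1 \<and> tlet N \<noteq> C)"
    by (rule sigma_pos_cover)
  then show ?thesis
    using tlet_sigma_pos tlet_Suc_sigma_pos[of N] by (cases "tlet N") auto
qed

lemma tlet_pred_of_not_A: "tlet p \<noteq> A \<Longrightarrow> 1 \<le> p \<and> tlet (p - 1) = A"
proof -
  assume "tlet p \<noteq> A"
  moreover obtain N where "p = sigma_pos N \<or> p = sigma_pos N + 1"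
    using sigma_pos_cover by blast
  ultimately show ?thesis
    using tlet_sigma_pos[of N] by auto
qed

subsection \<open>Occurrences of prefixes and the longest common prefix\<close>

definition prefix_occ :: "nat \<Rightarrow> nat \<Rightarrow> bool" where
  "prefix_occ j L \<longleftrightarrow> (\<forall>i<L. tlet (j + i) = tlet i)"

lemma prefix_occ_0 [simp]: "prefix_occ 0 L"
  by (simp add: prefix_occ_def)

lemma prefix_occ_iff_map: "prefix_occ j L \<longleftrightarrow> map tlet [j..<j + L] = tpref L"
  by (auto simp: prefix_occ_def list_eq_iff_nth_eq)

lemma sigma_pos_add: "prefix_occ a b \<Longrightarrow> sigma_pos (a + b) = sigma_pos a + sigma_pos b"
proof -
  assume "prefix_occ a b"
  then have "map tlet [sigma_pos a..<sigma_pos (a + b)] = tpref (sigma_pos b)"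
    using map_tlet_sigma_pos[of a "a + b"] by (simp add: prefix_occ_iff_map tpref_sigma_pos)
  then have "sigma_pos (a + b) - sigma_pos a = sigma_pos b"
    by (metis length_map length_upt length_tpref)
  then show ?thesis
    using strict_mono_less_eq[OF strict_mono_sigma_pos, of a "a + b"] by simp
qed

lemma prefix_occ_sigma_pos: "prefix_occ j L \<Longrightarrow> prefix_occ (sigma_pos j) (sigma_pos L)"
  using map_tlet_sigma_pos[of j "j + L"] sigma_pos_add[of j L]
  by (simp add: prefix_occ_iff_map tpref_sigma_pos)

text \<open>A mismatch after a common prefix survives desubstitution: the image of the mismatch
  starts with the common letter \<open>A\<close> and then differs by the injective \<open>next_letter\<close>.\<close>

lemma prefix_occ_sigma_pos_mismatch:
  assumes "prefix_occ j L" and "tlet (j + L) \<noteq> tlet L"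
  shows "prefix_occ (sigma_pos j) (sigma_pos L + 1)"
    and "tlet (sigma_pos j + (sigma_pos L + 1)) \<noteq> tlet (sigma_pos L + 1)"
proof -
  have e: "sigma_pos (j + L) = sigma_pos j + sigma_pos L"
    using sigma_pos_add[OF assms(1)] .
  have "tlet (sigma_pos j + sigma_pos L) = tlet (sigma_pos L)"
    using tlet_sigma_pos[of "j + L"] tlet_sigma_pos[of L] e by simp
  then show "prefix_occ (sigma_pos j) (sigma_pos L + 1)"
    using prefix_occ_sigma_pos[OF assms(1)] by (simp add: prefix_occ_def less_Suc_eq)
  show "tlet (sigma_pos j + (sigma_pos L + 1)) \<noteq> tlet (sigma_pos L + 1)"
    using tlet_Suc_sigma_pos[of "j + L"] tlet_Suc_sigma_pos[of L] e assms(2)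
    by (simp add: add.assoc next_letter_inj)
qed

definition lcp :: "nat \<Rightarrow> nat" where
  "lcp j = (LEAST L. tlet (j + L) \<noteq> tlet L)"

lemma lcp_eqI: "prefix_occ j L \<Longrightarrow> tlet (j + L) \<noteq> tlet L \<Longrightarrow> lcp j = L"
  unfolding lcp_def by (rule Least_equality) (auto simp: prefix_occ_def not_less[symmetric])

lemma lcp_small: "lcp 1 = 0" "lcp 3 = 0" "lcp 5 = 0"
  by (auto intro!: lcp_eqI simp: prefix_occ_def tlet_small)

lemma prefix_occ_mismatch_exists: "1 \<le> j \<Longrightarrow> \<exists>L. prefix_occ j L \<and> tlet (j + L) \<noteq> tlet L"
proof (induction j rule: less_induct)
  case (less j)
  show ?case
  proof (cases "tlet j = A")
    case False
    then show ?thesis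
      by (intro exI[of _ 0]) (simp add: prefix_occ_def tlet_small)
  next
    case True
    then obtain j' where j': "j = sigma_pos j'"
      using tlet_eq_A_iff by blast
    with less.prems have "1 \<le> j'"
      by (cases j') auto
    with j' have "j' < j"
      using sigma_pos_gt by simp
    with \<open>1 \<le> j'\<close> obtain L where "prefix_occ j' L" "tlet (j' + L) \<noteq> tlet L"
      using less.IH by blast
    then show ?thesis
      using prefix_occ_sigma_pos_mismatch j' by blast
  qed
qed

lemma lcp_mismatch: "1 \<le> j \<Longrightarrow> prefix_occ j (lcp j) \<and> tlet (j + lcp j) \<noteq> tlet (lcp j)"
  using prefix_occ_mismatch_exists lcp_eqI by metis

lemma prefix_occ_iff_le_lcp: "1 \<le> j \<Longrightarrow> prefix_occ j L \<longleftrightarrow> L \<le> lcp j"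
  using lcp_mismatch[of j] by (auto simp: prefix_occ_def not_less[symmetric])

lemma lcp_sigma_pos: "1 \<le> j \<Longrightarrow> lcp (sigma_pos j) = sigma_pos (lcp j) + 1"
  using lcp_mismatch prefix_occ_sigma_pos_mismatch lcp_eqI by metis

lemma lcp_add:
  assumes "prefix_occ p M" and "1 \<le> e" and "e + lcp e < M"
  shows "lcp (p + e) = lcp e"
proof (rule lcp_eqI)
  have e: "prefix_occ e (lcp e)" "tlet (e + lcp e) \<noteq> tlet (lcp e)"
    using lcp_mismatch[OF assms(2)] by auto
  then show "prefix_occ (p + e) (lcp e)"
    using assms(1,3) by (auto simp: prefix_occ_def add.assoc)
  show "tlet (p + e + lcp e) \<noteq> tlet (lcp e)"
    using e assms(1,3) by (auto simp: prefix_occ_def add.assoc)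
qed

definition tsum :: "nat \<Rightarrow> nat" where
  "tsum k = (\<Sum>i<k. trib i)"

lemma tsum_0 [simp]: "tsum 0 = 0"
  by (simp add: tsum_def)

lemma tsum_Suc: "tsum (Suc k) = tsum k + trib k"
  by (simp add: tsum_def)

lemma tsum_small: "tsum 1 = 1" "tsum 2 = 3" "tsum 3 = 7" "tsum 4 = 14"
  by (simp_all add: tsum_def numeral_eq_Suc lessThan_Suc)

lemma tsum_rec: "tsum (k + 3) = trib (k + 3) + tsum k"
  using trib_rec[of k] by (simp add: tsum_Suc numeral_eq_Suc)

lemma tsum_lt_trib: "tsum k < trib (Suc k)"
proof (induction k)
  case (Suc k)
  then show ?case using trib_Suc_Suc_ge[of k] by (simp add: tsum_Suc)
qed simp

lemma trib_le_tsum: "trib k \<le> tsum k + 1"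
proof (induction k)
  case (Suc k)
  then show ?case using trib_Suc_le_double[of k] by (simp add: tsum_Suc)
qed simp

lemma tsum_lt_double: "tsum k < 2 * trib k"
proof (induction k)
  case (Suc k)
  then show ?case using trib_Suc_ge_three_halves[of k] by (simp add: tsum_Suc)
qed simp

lemma tsum_double: "2 * tsum (k + 2) + 3 = trib (k + 3) + trib (k + 1)"
proof (induction k)
  case (Suc k)
  then show ?case
    using trib_rec[of "Suc k"] by (simp add: tsum_Suc numeral_eq_Suc)
qed (simp add: tsum_def numeral_eq_Suc lessThan_Suc)

lemma lcp_trib_and_sigma_pos_tsum:
  "lcp (trib k) = tsum k \<and> sigma_pos (tsum k) + 1 = tsum (Suc k)"
proof (induction k)
  case 0
  then show ?case using lcp_small by (simp add: tsum_Suc)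
next
  case (Suc k)
  have t: "1 \<le> trib k"
    using trib_pos[of k] by simp
  have "lcp (trib (Suc k)) = sigma_pos (lcp (trib k)) + 1"
    using lcp_sigma_pos[OF t] by (simp flip: sigma_pos_trib)
  then have lcp: "lcp (trib (Suc k)) = tsum (Suc k)"
    using Suc by simp
  have "prefix_occ (trib k) (tsum k)"
    using prefix_occ_iff_le_lcp[OF t] Suc by simp
  then have "sigma_pos (tsum (Suc k)) = trib (Suc k) + sigma_pos (tsum k)"
    using sigma_pos_add by (simp add: tsum_Suc add.commute sigma_pos_trib)
  then show ?case
    using lcp Suc by (simp add: tsum_Suc[of "Suc k"])
qed

lemma lcp_trib: "lcp (trib k) = tsum k"
  using lcp_trib_and_sigma_pos_tsum by simp

lemma sigma_pos_tsum: "sigma_pos (tsum k) + 1 = tsum (Suc k)"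
  using lcp_trib_and_sigma_pos_tsum by simp

lemma prefix_occ_trib: "prefix_occ (trib k) (tsum k)"
  using prefix_occ_iff_le_lcp[of "trib k"] trib_pos[of k] by (simp add: lcp_trib)

lemma lcp_trib_pair: "lcp (trib (Suc k) + trib k) = tsum k"
proof (induction k)
  case 0
  then show ?case using lcp_small by simp
next
  case (Suc k)
  have "prefix_occ (trib (Suc k)) (trib k)"
    using prefix_occ_iff_le_lcp[of "trib (Suc k)"] trib_pos[of "Suc k"]
    by (simp add: lcp_trib tsum_Suc)
  then have "sigma_pos (trib (Suc k) + trib k) = trib (Suc (Suc k)) + trib (Suc k)"
    by (simp add: sigma_pos_add sigma_pos_trib)
  then have "lcp (trib (Suc (Suc k)) + trib (Suc k))
      = sigma_pos (lcp (trib (Suc k) + trib k)) + 1"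
    using lcp_sigma_pos[of "trib (Suc k) + trib k"] trib_pos[of k] by simp
  then show ?case
    using Suc sigma_pos_tsum by simp
qed

lemma prefix_occ_trib_pair: "prefix_occ (trib (Suc k) + trib k) (tsum k)"
  using prefix_occ_iff_le_lcp[of "trib (Suc k) + trib k"] trib_pos[of k]
  by (simp add: lcp_trib_pair)

text \<open>Inside the last two blocks of \<open>\<sigma>\<^sup>k\<^sup>+\<^sup>3(a) = \<sigma>\<^sup>k\<^sup>+\<^sup>2(a) \<sigma>\<^sup>k\<^sup>+\<^sup>1(a) \<sigma>\<^sup>k(a)\<close> the
  function \<open>lcp\<close> is inherited from the block.\<close>

lemma lcp_trib_add: "1 \<le> e \<Longrightarrow> e + lcp e < tsum k \<Longrightarrow> lcp (trib k + e) = lcp e"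
  by (rule lcp_add[OF prefix_occ_trib])

lemma lcp_trib_pair_add:
  "1 \<le> e \<Longrightarrow> e + lcp e < tsum k \<Longrightarrow> lcp (trib (Suc k) + trib k + e) = lcp e"
  by (rule lcp_add[OF prefix_occ_trib_pair])

lemma trib_position_cases:
  assumes "j < trib (k + 3)"
  obtains (low) "j < trib (k + 2)"
    | (block) "j = trib (k + 2)"
    | (mid) e where "1 \<le> e" "e < trib (k + 1)" "j = trib (k + 2) + e"
    | (pair) "j = trib (k + 2) + trib (k + 1)"
    | (high) e where "1 \<le> e" "e < trib k" "j = trib (k + 2) + trib (k + 1) + e"
proof -
  consider "j < trib (k + 2)" | "j = trib (k + 2)"
    | "trib (k + 2) < j" "j < trib (k + 2) + trib (k + 1)" | "j = trib (k + 2) + trib (k + 1)"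
    | "trib (k + 2) + trib (k + 1) < j"
    by linarith
  then show thesis
  proof cases
    case 3
    then show thesis
      using mid[of "j - trib (k + 2)"] by simp
  next
    case 5
    then show thesis
      using high[of "j - (trib (k + 2) + trib (k + 1))"] assms trib_rec[of k] by simp
  qed (use that in blast)+
qed

lemma lcp_bound: "1 \<le> j \<Longrightarrow> j < trib k \<Longrightarrow> j + lcp j \<le> tsum k"
proof (induction k arbitrary: j rule: less_induct)
  case (less k)
  show ?case
  proof (cases "k < 3")
    case True
    with less.prems have "k = 1 \<and> j = 1 \<or> k = 2 \<and> (j = 1 \<or> j = 2 \<or> j = 3)"
      by (auto simp: less_Suc_eq numeral_eq_Suc)
    then show ?thesis
      using lcp_small lcp_trib[of 1] by (auto simp: tsum_def numeral_eq_Suc lessThan_Suc)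
  next
    case False
    then obtain K where K: "k = K + 3"
      by (metis add.commute le_Suc_ex not_less)
    have tsum: "tsum (K + 3) = tsum (K + 2) + trib (K + 2)"
      "tsum (K + 2) = tsum (K + 1) + trib (K + 1)" "tsum (K + 1) = tsum K + trib K"
      by (simp_all add: tsum_Suc numeral_eq_Suc)
    from less.prems(2) have "j < trib (K + 3)"
      by (simp add: K)
    then show ?thesis
    proof (cases rule: trib_position_cases)
      case low
      then show ?thesis using less.IH[of "K + 2" j] less.prems(1) K tsum by simp
    next
      case block
      then show ?thesis using lcp_trib[of "K + 2"] K tsum by simp
    next
      case (mid e)
      then have "e + lcp e \<le> tsum (K + 1)"
        using less.IH[of "K + 1" e] K by simp
      moreover from this have "lcp j = lcp e"
        using mid lcp_trib_add[of e "K + 2"] tsum trib_pos[of "K + 1"] by simp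
      ultimately show ?thesis using mid K tsum by simp
    next
      case pair
      then show ?thesis using lcp_trib_pair[of "K + 1"] K tsum by simp
    next
      case (high e)
      then have "e + lcp e \<le> tsum K"
        using less.IH[of K e] K by simp
      moreover from this have "lcp j = lcp e"
        using high lcp_trib_pair_add[of e "K + 1"] tsum trib_pos[of K] by (simp add: add.commute)
      ultimately show ?thesis using high K tsum by simp
    qed
  qed
qed

lemma lcp_decomp:
  assumes "j < trib (k + 3)"
  obtains (low) "j < trib (k + 2)"
    | (block) "j = trib (k + 2)"
    | (mid) e where "1 \<le> e" "e < trib (k + 1)" "j = trib (k + 2) + e" "lcp j = lcp e"
    | (pair) "j = trib (k + 2) + trib (k + 1)"
    | (high) e where "1 \<le> e" "e < trib k" "j = trib (k + 2) + trib (k + 1) + e" "lcp j = lcp e"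
proof -
  have tsum: "tsum (k + 2) = tsum (k + 1) + trib (k + 1)" "tsum (k + 1) = tsum k + trib k"
    by (simp_all add: tsum_Suc numeral_eq_Suc)
  from assms show thesis
  proof (cases rule: trib_position_cases)
    case (mid e)
    then have "lcp j = lcp e"
      using lcp_bound[of e "k + 1"] lcp_trib_add[of e "k + 2"] tsum trib_pos[of "k + 1"] by simp
    then show thesis
      using that(3) mid by blast
  next
    case (high e)
    then have "lcp j = lcp e"
      using lcp_bound[of e k] lcp_trib_pair_add[of e "k + 1"] tsum trib_pos[of k]
      by (simp add: add.commute)
    then show thesis
      using that(5) high by blast
  qed (use that in blast)+
qed

lemma lcp_le_tsum: "1 \<le> e \<Longrightarrow> e < trib (Suc k) \<Longrightarrow> lcp e \<le> tsum k"
proof (induction k arbitrary: e)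
  case 0
  then have "e = 1" by simp
  then show ?case using lcp_small by simp
next
  case (Suc k)
  show ?case
  proof (cases "e < trib (Suc k)")
    case True
    then show ?thesis using Suc.IH[OF Suc.prems(1) True] by (simp add: tsum_Suc)
  next
    case False
    then show ?thesis using lcp_bound[of e "Suc (Suc k)"] Suc.prems by (simp add: tsum_Suc)
  qed
qed

lemma lcp_gt_tsum_cases:
  "1 \<le> j \<Longrightarrow> j < trib (k + 3) \<Longrightarrow> tsum k < lcp j \<Longrightarrow>
    j = trib (k + 1) \<or> j = trib (k + 2) \<or> j = trib (k + 2) + trib (k + 1)"
proof (induction k arbitrary: j)
  case 0
  then have "j \<in> {1..<7}"
    by simp
  then show ?case
    using 0 lcp_small by (auto simp: atLeastLessThan_def lessThan_Suc numeral_eq_Suc)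
next
  case (Suc k)
  have tsum: "tsum k \<le> tsum (Suc k)"
    by (simp add: tsum_Suc)
  from Suc.prems(2) show ?case
  proof (cases rule: lcp_decomp)
    case low
    then have "j = trib (k + 1) \<or> j = trib (k + 2) \<or> j = trib (k + 2) + trib (k + 1)"
      using Suc.IH[of j] Suc.prems tsum by (simp add: numeral_eq_Suc)
    moreover have "lcp (trib (k + 1)) = tsum (Suc k)" "lcp (trib (k + 2) + trib (k + 1)) = tsum (Suc k)"
      using lcp_trib lcp_trib_pair[of "k + 1"] by simp_all
    ultimately show ?thesis
      using Suc.prems by (auto simp: numeral_eq_Suc)
  next
    case (mid e)
    then show ?thesis using lcp_le_tsum[of e "Suc k"] Suc.prems by simp
  next
    case (high e)
    then show ?thesis using lcp_le_tsum[of e k] Suc.prems tsum by simp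
  qed (simp_all add: numeral_eq_Suc)
qed

lemma lcp_reach_cases:
  assumes j: "1 \<le> j" "j < trib (k + 3)" and reach: "trib (k + 3) + trib k \<le> j + lcp j"
  shows "j = trib (k + 2) \<or> j = trib (k + 2) + trib (k + 1)"
  using j(2)
proof (cases rule: lcp_decomp)
  case low
  then show ?thesis
    using lcp_bound[of j "k + 2"] j reach tsum_lt_trib[of "k + 2"] by (simp add: numeral_eq_Suc)
next
  case (mid e)
  then show ?thesis
    using reach trib_rec[of k] tsum_lt_trib[of k] lcp_bound[of e "k + 1"] by (simp add: tsum_Suc)
next
  case (high e)
  then show ?thesis
    using reach trib_rec[of k] tsum_lt_double[of k] lcp_bound[of e k] by simp
qed simp_all

subsection \<open>Left special factors are prefixes\<close>

lemma common_factor_desubst: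
  assumes common: "\<forall>i<c. tlet (sigma_pos p + i) = tlet (sigma_pos q + i)"
    and inside: "\<forall>i<n. sigma_pos (p + i) + 1 < sigma_pos p + c"
  shows "(\<forall>i<n. tlet (p + i) = tlet (q + i))
    \<and> sigma_pos (q + n) + sigma_pos p = sigma_pos (p + n) + sigma_pos q"
  using inside
proof (induction n)
  case (Suc n)
  then have IH: "\<forall>i<n. tlet (p + i) = tlet (q + i)"
      "sigma_pos (q + n) + sigma_pos p = sigma_pos (p + n) + sigma_pos q"
    by auto
  define r where "r = sigma_pos (p + n) - sigma_pos p"
  have r: "sigma_pos (p + n) = sigma_pos p + r" "sigma_pos (q + n) = sigma_pos q + r"
    using IH(2) strict_mono_less_eq[OF strict_mono_sigma_pos, of p "p + n"] by (auto simp: r_def)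
  have "r + 1 < c"
    using Suc.prems r by auto
  then have "tlet (sigma_pos (p + n) + 1) = tlet (sigma_pos (q + n) + 1)"
    using common[rule_format, of "r + 1"] r by (simp add: add.assoc)
  then have eq: "tlet (p + n) = tlet (q + n)"
    unfolding tlet_Suc_sigma_pos next_letter_inj .
  then have "sigma_pos (q + Suc n) + sigma_pos p = sigma_pos (p + Suc n) + sigma_pos q"
    using IH(2) by (simp add: sigma_pos_Suc)
  then show ?case
    using IH(1) eq less_Suc_eq by auto
qed simp

lemma sigma_pos_reaching:
  assumes "0 < c"
  obtains c' where "c' < c" "sigma_pos p + c \<le> sigma_pos (p + c') + 1"
    "\<forall>i<c'. sigma_pos (p + i) + 1 < sigma_pos p + c"
proof -
  let ?P = "\<lambda>i. sigma_pos p + c \<le> sigma_pos (p + i) + 1"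
  have ex: "?P (c - 1)"
    using sigma_pos_add_ge[of p "c - 1"] assms by simp
  show thesis
  proof (rule that)
    show "(LEAST i. ?P i) < c"
      using Least_le[of ?P, OF ex] assms by simp
    show "?P (LEAST i. ?P i)"
      using LeastI[of ?P, OF ex] .
    show "\<forall>i<(LEAST i. ?P i). sigma_pos (p + i) + 1 < sigma_pos p + c"
      using not_less_Least[of _ ?P] by (simp add: not_le)
  qed
qed

text \<open>Desubstitution: a common factor starting with \<open>A\<close> after two different letters comes from
  a shorter common factor after two different letters.\<close>

lemma prefix_occ_of_left_special:
  "1 \<le> p \<Longrightarrow> 1 \<le> q \<Longrightarrow> tlet (p - 1) \<noteq> tlet (q - 1) \<Longrightarrow>
    \<forall>i<c. tlet (p + i) = tlet (q + i) \<Longrightarrow> prefix_occ p c"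
proof (induction c arbitrary: p q rule: less_induct)
  case (less c)
  show ?case
  proof (cases "c = 0")
    case False
    have common: "\<forall>i<c. tlet (p + i) = tlet (q + i)"
      using less.prems(4) .
    then have "tlet p = tlet q"
      using False by (metis add_0_right gr0I)
    moreover have "tlet p = A"
      using less.prems(3) tlet_pred_of_not_A[of p] tlet_pred_of_not_A[of q] calculation
      by (cases "tlet p = A") auto
    ultimately obtain p' q' where p': "p = sigma_pos p'" and q': "q = sigma_pos q'"
      using tlet_eq_A_iff by metis
    have "1 \<le> p'" "1 \<le> q'"
      using p' q' less.prems(1,2) by (cases p'; cases q'; simp)+
    then have before: "tlet (p' - 1) \<noteq> tlet (q' - 1)"
      using tlet_before_sigma_pos less.prems(3) p' q' by auto
    obtain c' where c': "c' < c" "p + c \<le> sigma_pos (p' + c') + 1"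
      and "\<forall>i<c'. sigma_pos (p' + i) + 1 < sigma_pos p' + c"
      using sigma_pos_reaching[of c p'] False p' by blast
    then have "\<forall>i<c'. tlet (p' + i) = tlet (q' + i)"
      using common_factor_desubst[of c p' q' c'] common p' q' by simp
    then have occ: "prefix_occ p' c'"
      using less.IH[OF c'(1) \<open>1 \<le> p'\<close> \<open>1 \<le> q'\<close> before] by simp
    have last: "sigma_pos (p' + c') = p + sigma_pos c'"
      using sigma_pos_add[OF occ] p' by simp
    have "prefix_occ p (sigma_pos c')"
      using prefix_occ_sigma_pos[OF occ] p' by simp
    moreover have "tlet (p + sigma_pos c') = tlet (sigma_pos c')"
      using tlet_sigma_pos[of "p' + c'"] tlet_sigma_pos[of c'] last by simp
    ultimately show ?thesis
      using c'(2) last by (auto simp: prefix_occ_def less_Suc_eq_le le_less)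
  qed (simp add: prefix_occ_def)
qed

subsection \<open>Earlier occurrences and squares\<close>

definition fresh_suffix :: "nat \<Rightarrow> nat \<Rightarrow> bool" where
  "fresh_suffix n s \<longleftrightarrow> \<not> (\<exists>e<n. s \<le> e \<and> (\<forall>i<s. tlet (e - s + i) = tlet (n - s + i)))"

definition square_suffix :: "nat \<Rightarrow> nat \<Rightarrow> bool" where
  "square_suffix n l \<longleftrightarrow> (\<forall>i<l. tlet (n - 2 * l + i) = tlet (n - l + i))"

lemma common_factor_extend_left:
  assumes "c < e1" "e1 < e2" "tlet (e1 - c - 1) = tlet (e2 - c - 1)"
    and "\<forall>i<c. tlet (e1 - c + i) = tlet (e2 - c + i)"
  shows "\<forall>i<Suc c. tlet (e1 - Suc c + i) = tlet (e2 - Suc c + i)"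
proof (intro allI impI)
  fix i
  assume i: "i < Suc c"
  show "tlet (e1 - Suc c + i) = tlet (e2 - Suc c + i)"
  proof (cases i)
    case 0
    then show ?thesis using assms(3) by simp
  next
    case (Suc i')
    then have "e1 - Suc c + i = e1 - c + i'" "e2 - Suc c + i = e2 - c + i'" "i' < c"
      using assms(1,2) i by auto
    then show ?thesis using assms(4) by simp
  qed
qed

text \<open>Extend two occurrences of a common factor to the left as far as possible: either the
  first one reaches position \<open>0\<close>, or the extended factor is left special.\<close>

lemma common_factor_extends_to_prefix:
  assumes "e1 < e2" "s \<le> e1" "\<forall>i<s. tlet (e1 - s + i) = tlet (e2 - s + i)"
  obtains c where "s \<le> c" "c \<le> e1" "prefix_occ (e1 - c) c" "prefix_occ (e2 - c) c"
proof -
  define C where "C = {c. c \<le> e1 \<and> (\<forall>i<c. tlet (e1 - c + i) = tlet (e2 - c + i))}"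
  define c where "c = Max C"
  have "finite C" "s \<in> C"
    using assms by (auto simp: C_def)
  then have "c \<in> C" "s \<le> c" "\<And>c'. c' \<in> C \<Longrightarrow> c' \<le> c"
    unfolding c_def by (auto intro: Max_in)
  then have c: "s \<le> c" "c \<le> e1" and common: "\<forall>i<c. tlet (e1 - c + i) = tlet (e2 - c + i)"
    and maximal: "\<And>c'. c' \<in> C \<Longrightarrow> c' \<le> c"
    by (auto simp: C_def)
  have "prefix_occ (e1 - c) c"
  proof (cases "c = e1")
    case False
    have "tlet (e1 - c - 1) \<noteq> tlet (e2 - c - 1)"
    proof
      assume "tlet (e1 - c - 1) = tlet (e2 - c - 1)"
      then have "Suc c \<in> C"
        using common_factor_extend_left[of c e1 e2] common c False assms(1) by (simp add: C_def)
      then show False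
        using maximal[of "Suc c"] by simp
    qed
    moreover have "1 \<le> e1 - c" "1 \<le> e2 - c"
      using c False assms(1) by auto
    ultimately show ?thesis
      using prefix_occ_of_left_special common by blast
  qed (use common in \<open>simp add: prefix_occ_def\<close>)
  moreover from this have "prefix_occ (e2 - c) c"
    using common by (simp add: prefix_occ_def)
  ultimately show thesis
    using that c by blast
qed

lemma not_fresh_suffix_iff:
  assumes "s \<le> n"
  shows "\<not> fresh_suffix n s \<longleftrightarrow> (\<exists>j. 1 \<le> j \<and> j \<le> n - s \<and> prefix_occ j (n - j))"
proof
  assume "\<not> fresh_suffix n s"
  then obtain e where "e < n" "s \<le> e" "\<forall>i<s. tlet (e - s + i) = tlet (n - s + i)"
    by (auto simp: fresh_suffix_def)
  then obtain c where "s \<le> c" "c \<le> e" "prefix_occ (n - c) c"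
    by (rule common_factor_extends_to_prefix)
  with \<open>e < n\<close> show "\<exists>j. 1 \<le> j \<and> j \<le> n - s \<and> prefix_occ j (n - j)"
    by (intro exI[of _ "n - c"]) auto
next
  assume "\<exists>j. 1 \<le> j \<and> j \<le> n - s \<and> prefix_occ j (n - j)"
  then obtain j where j: "1 \<le> j" "j \<le> n - s" "prefix_occ j (n - j)"
    by blast
  have "\<forall>i<s. tlet (n - j - s + i) = tlet (n - s + i)"
  proof (intro allI impI)
    fix i
    assume "i < s"
    define i' where "i' = n - j - s + i"
    have i': "i' < n - j" "j + i' = n - s + i"
      using j \<open>i < s\<close> assms by (auto simp: i'_def)
    then have "tlet (j + i') = tlet i'"
      using j(3) unfolding prefix_occ_def by blast
    then have "tlet (n - s + i) = tlet i'"
      using i'(2) by simp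
    then show "tlet (n - j - s + i) = tlet (n - s + i)"
      by (simp add: i'_def)
  qed
  moreover have "n - j < n" "s \<le> n - j"
    using j assms by auto
  ultimately show "\<not> fresh_suffix n s"
    unfolding fresh_suffix_def by blast
qed

lemma square_suffix_iff:
  assumes "1 \<le> l" "2 * l \<le> n"
  shows "square_suffix n l \<longleftrightarrow>
    (\<exists>j. j + 2 * l \<le> n \<and> prefix_occ (j + l) (n - (j + l)) \<and> prefix_occ j (n - (j + l)))"
proof
  assume sq: "square_suffix n l"
  have "n - l < n" "l \<le> n - l"
    using assms by auto
  moreover have "\<forall>i<l. tlet (n - l - l + i) = tlet (n - l + i)"
    using sq by (simp add: square_suffix_def diff_diff_add mult_2)
  ultimately obtain c where "l \<le> c" "c \<le> n - l" "prefix_occ (n - l - c) c" "prefix_occ (n - c) c"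
    by (rule common_factor_extends_to_prefix)
  then show "\<exists>j. j + 2 * l \<le> n \<and> prefix_occ (j + l) (n - (j + l)) \<and> prefix_occ j (n - (j + l))"
    using assms by (intro exI[of _ "n - l - c"]) (auto simp: mult_2)
next
  assume "\<exists>j. j + 2 * l \<le> n \<and> prefix_occ (j + l) (n - (j + l)) \<and> prefix_occ j (n - (j + l))"
  then obtain j where j: "j + 2 * l \<le> n" "prefix_occ (j + l) (n - (j + l))" "prefix_occ j (n - (j + l))"
    by blast
  show "square_suffix n l"
    unfolding square_suffix_def
  proof (intro allI impI)
    fix i
    assume "i < l"
    define i' where "i' = n - (j + l) - l + i"
    have i': "i' < n - (j + l)" "j + i' = n - 2 * l + i" "j + l + i' = n - l + i"
      using j(1) \<open>i < l\<close> by (auto simp: i'_def)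
    then have "tlet (j + i') = tlet i'" "tlet (j + l + i') = tlet i'"
      using j(2,3) unfolding prefix_occ_def by blast+
    then show "tlet (n - 2 * l + i) = tlet (n - l + i)"
      using i'(2,3) by simp
  qed
qed

lemma fresh_suffix_iff:
  assumes "tsum k < n" "n \<le> tsum (Suc k)" "s \<le> n"
  shows "fresh_suffix n s \<longleftrightarrow> n < s + trib k"
proof -
  have "(\<exists>j. 1 \<le> j \<and> j \<le> n - s \<and> prefix_occ j (n - j)) \<longleftrightarrow> trib k \<le> n - s"
  proof
    assume "\<exists>j. 1 \<le> j \<and> j \<le> n - s \<and> prefix_occ j (n - j)"
    then obtain j where j: "1 \<le> j" "j \<le> n - s" "prefix_occ j (n - j)"
      by blast
    then have "n \<le> j + lcp j"
      using prefix_occ_iff_le_lcp[OF j(1)] by simp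
    then have "\<not> j < trib k"
      using lcp_bound[OF j(1), of k] assms(1) by linarith
    then show "trib k \<le> n - s"
      using j by simp
  next
    assume "trib k \<le> n - s"
    moreover have "prefix_occ (trib k) (n - trib k)"
      using prefix_occ_iff_le_lcp[of "trib k"] trib_pos[of k] assms(2)
      by (simp add: lcp_trib tsum_Suc)
    ultimately show "\<exists>j. 1 \<le> j \<and> j \<le> n - s \<and> prefix_occ j (n - j)"
      using trib_pos[of k] by (intro exI[of _ "trib k"]) auto
  qed
  then show ?thesis
    using not_fresh_suffix_iff[OF assms(3)] assms by auto
qed

subsection \<open>From square words to square lengths\<close>

definition square_lengths :: "nat \<Rightarrow> nat set" where
  "square_lengths n = {l. 1 \<le> l \<and> 2 * l \<le> n \<and> square_suffix n l \<and> fresh_suffix n (2 * l)}"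

lemma map_tlet_eq_iff:
  "map tlet [a..<a + s] = map tlet [b..<b + s] \<longleftrightarrow> (\<forall>i<s. tlet (a + i) = tlet (b + i))"
  by (auto simp: list_eq_iff_nth_eq)

lemma suffix_tpref_iff: "suffix u (tpref n) \<longleftrightarrow> length u \<le> n \<and> u = map tlet [n - length u..<n]"
proof
  assume "suffix u (tpref n)"
  then obtain v where v: "tpref n = v @ u"
    by (auto simp: suffix_def)
  moreover have "length v = n - length u" "length u \<le> n"
    using arg_cong[where f = length, OF v] by simp_all
  ultimately show "length u \<le> n \<and> u = map tlet [n - length u..<n]"
    using drop_tpref[of "length v" n] by simp
next
  assume "length u \<le> n \<and> u = map tlet [n - length u..<n]"
  then have "drop (n - length u) (tpref n) = u"
    using drop_tpref[of "n - length u" n] by simp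
  then have "tpref n = take (n - length u) (tpref n) @ u"
    by (metis append_take_drop_id)
  then show "suffix u (tpref n)"
    unfolding suffix_def by blast
qed

lemma sublist_tpref_iff:
  "sublist u (tpref m) \<longleftrightarrow> (\<exists>e. length u \<le> e \<and> e \<le> m \<and> u = map tlet [e - length u..<e])"
proof
  assume "sublist u (tpref m)"
  then obtain v z where e: "tpref m = v @ u @ z"
    by (auto simp: sublist_def)
  have "length v + length u \<le> m"
    using arg_cong[where f = length, OF e] by simp
  moreover have "u = map tlet [length v..<length v + length u]"
    by (rule nth_equalityI) (auto simp: tlet_of_append[OF e] nth_append)
  ultimately show "\<exists>e. length u \<le> e \<and> e \<le> m \<and> u = map tlet [e - length u..<e]"
    by (intro exI[of _ "length v + length u"]) simp
next
  assume "\<exists>e. length u \<le> e \<and> e \<le> m \<and> u = map tlet [e - length u..<e]"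
  then obtain e where e: "e \<le> m" "suffix u (tpref e)"
    using suffix_tpref_iff by blast
  moreover have "prefix (tpref e) (tpref m)"
    using e(1) tpref_add[of e "m - e"] by simp
  ultimately show "sublist u (tpref m)"
    by (meson prefix_imp_sublist sublist_order.order.trans suffix_imp_sublist)
qed

lemma sublist_tpref_pred_iff:
  assumes "1 \<le> n" "s \<le> n"
  shows "sublist (map tlet [n - s..<n]) (tpref (n - 1)) \<longleftrightarrow> \<not> fresh_suffix n s"
proof -
  have "map tlet [n - s..<n] = map tlet [e - s..<e] \<longleftrightarrow>
      (\<forall>i<s. tlet (e - s + i) = tlet (n - s + i))" if "s \<le> e" for e
    using map_tlet_eq_iff[of "e - s" s "n - s"] that assms(2) by auto
  moreover have "e \<le> n - 1 \<longleftrightarrow> e < n" for e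
    using assms(1) by auto
  moreover have "length (map tlet [n - s..<n]) = s"
    using assms(2) by simp
  ultimately show ?thesis
    unfolding sublist_tpref_iff fresh_suffix_def by auto
qed

lemma square_word_iff:
  assumes "2 * length w \<le> n"
  shows "w @ w = map tlet [n - 2 * length w..<n]
    \<longleftrightarrow> w = map tlet [n - length w..<n] \<and> square_suffix n (length w)"
proof -
  let ?l = "length w"
  have split: "map tlet [n - 2 * ?l..<n] = map tlet [n - 2 * ?l..<n - ?l] @ map tlet [n - ?l..<n]"
    using assms upt_add_eq_append[of "n - 2 * ?l" "n - ?l" ?l] by (simp add: mult_2)
  have "square_suffix n ?l \<longleftrightarrow> map tlet [n - 2 * ?l..<n - ?l] = map tlet [n - ?l..<n]"
    using map_tlet_eq_iff[of "n - 2 * ?l" ?l "n - ?l"] assms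
    by (simp add: square_suffix_def mult_2 diff_diff_add)
  moreover have "w @ w = map tlet [n - 2 * ?l..<n - ?l] @ map tlet [n - ?l..<n] \<longleftrightarrow>
      w = map tlet [n - 2 * ?l..<n - ?l] \<and> w = map tlet [n - ?l..<n]"
    using assms by (intro append_eq_append_conv) simp
  ultimately show ?thesis
    unfolding split by auto
qed

lemma new_square_word_iff:
  assumes "1 \<le> n"
  shows "w \<noteq> [] \<and> suffix (w @ w) (tpref n) \<and> \<not> sublist (w @ w) (tpref (n - 1))
    \<longleftrightarrow> length w \<in> square_lengths n \<and> w = map tlet [n - length w..<n]"
    (is "?new \<longleftrightarrow> ?square")
proof (cases "2 * length w \<le> n")
  case True
  let ?ww = "map tlet [n - 2 * length w..<n]"
  have suffix: "suffix (w @ w) (tpref n) \<longleftrightarrow> w @ w = ?ww"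
    using suffix_tpref_iff[of "w @ w"] True by (simp add: mult_2)
  have fresh: "\<not> sublist ?ww (tpref (n - 1)) \<longleftrightarrow> fresh_suffix n (2 * length w)"
    using sublist_tpref_pred_iff[OF assms True] by simp
  show ?thesis
  proof
    assume new: ?new
    then have "w @ w = ?ww"
      using suffix by blast
    with new fresh True show ?square
      using square_word_iff[OF True] by (simp add: square_lengths_def Suc_le_eq)
  next
    assume sq: ?square
    then have "w @ w = ?ww"
      using square_word_iff[OF True] by (simp add: square_lengths_def)
    with sq fresh suffix show ?new
      by (auto simp: square_lengths_def)
  qed
next
  case False
  then show ?thesis
    using suffix_tpref_iff[of "w @ w"] by (auto simp: square_lengths_def mult_2)
qed

lemma acount_eq_card_square_lengths: "1 \<le> n \<Longrightarrow> acount n = card (square_lengths n)"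
proof -
  assume n: "1 \<le> n"
  let ?word = "\<lambda>l. map tlet [n - l..<n]"
  have length_word: "length (?word l) = l" if "l \<in> square_lengths n" for l
    using that by (simp add: square_lengths_def)
  have "{w. w \<noteq> [] \<and> suffix (w @ w) (tpref n) \<and> \<not> sublist (w @ w) (tpref (n - 1))}
      = ?word ` square_lengths n"
  proof (intro set_eqI iffI)
    fix w
    assume "w \<in> {w. w \<noteq> [] \<and> suffix (w @ w) (tpref n) \<and> \<not> sublist (w @ w) (tpref (n - 1))}"
    then have "length w \<in> square_lengths n \<and> w = ?word (length w)"
      using new_square_word_iff[OF n, of w] by simp
    then have "length w \<in> square_lengths n" "w = ?word (length w)"
      by simp_all
    then show "w \<in> ?word ` square_lengths n"
      by (rule rev_image_eqI)
  next
    fix w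
    assume "w \<in> ?word ` square_lengths n"
    then obtain l where l: "l \<in> square_lengths n" and w: "w = ?word l"
      by blast
    then have "length w \<in> square_lengths n \<and> w = ?word (length w)"
      using length_word[OF l] by simp
    then show "w \<in> {w. w \<noteq> [] \<and> suffix (w @ w) (tpref n) \<and> \<not> sublist (w @ w) (tpref (n - 1))}"
      using new_square_word_iff[OF n, of w] by simp
  qed
  moreover have "inj_on ?word (square_lengths n)"
    by (rule inj_on_inverseI[where g = length]) (rule length_word)
  ultimately show ?thesis
    unfolding acount_def by (simp add: card_image)
qed

subsection \<open>The new squares ending at position \<open>n\<close>\<close>

definition block_square_lengths :: "nat \<Rightarrow> nat \<Rightarrow> nat set" where
  "block_square_lengths k n =
    {l. l = trib (k + 3) \<and> 2 * trib (k + 3) \<le> n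
      \<or> l = trib k \<and> n < trib (k + 3) + 2 * trib k
      \<or> l = trib (k + 1) + trib k \<and> 2 * trib (k + 3) \<le> n + trib (k + 2)
          \<and> n \<le> trib (k + 3) + tsum (k + 2)}"

lemma no_square_prefix_past_block:
  assumes n: "tsum (k + 3) < n" "n \<le> tsum (k + 4)"
    and sq: "2 * l \<le> n" "n \<le> l + lcp l" and past: "trib (k + 3) < l"
  shows False
proof -
  define d where "d = l - trib (k + 3)"
  have d: "1 \<le> d" "l = trib (k + 3) + d"
    using past by (simp_all add: d_def)
  have tsum: "tsum (k + 3) = trib (k + 3) + tsum k" "tsum (k + 4) = tsum (k + 3) + trib (k + 3)"
    by (rule tsum_rec) (simp add: tsum_Suc numeral_eq_Suc)
  then have "2 * d \<le> tsum k"
    using sq(1) n(2) d(2) by simp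
  then have small: "d + lcp d \<le> tsum k"
    using lcp_bound[OF d(1)] tsum_lt_double[of k] by simp
  moreover have "tsum k < tsum (k + 3)"
    using tsum trib_pos[of "k + 3"] by simp
  ultimately have "lcp l = lcp d"
    using lcp_trib_add[OF d(1), of "k + 3"] d(2) by simp
  then show False
    using sq(2) d(2) small n(1) tsum(1) by linarith
qed

lemma no_new_square_past_block:
  assumes n: "tsum (k + 3) < n"
    and sq: "1 \<le> j" "j + 2 * l \<le> n" "n \<le> j + l + lcp (j + l)" "n - (j + l) \<le> lcp j"
    and fresh: "n < 2 * l + trib (k + 3)" and past: "trib (k + 3) < j + l"
  shows False
proof -
  define d where "d = j + l - trib (k + 3)"
  have d: "1 \<le> d" "j + l = trib (k + 3) + d"
    using past by (simp_all add: d_def)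
  have tsum: "tsum (k + 3) = trib (k + 3) + tsum k" "tsum (k + 3) = tsum (k + 2) + trib (k + 2)"
    by (rule tsum_rec) (simp add: tsum_Suc numeral_eq_Suc)
  have j: "1 \<le> j" "j < trib (k + 3)"
    using sq(1,2) fresh by simp_all
  have reach_j: "trib (k + 3) + d \<le> j + lcp j"
    using sq(2,4) d(2) by simp
  then have "d \<le> tsum k"
    using lcp_bound[OF j] tsum by simp
  then have d_small: "d < trib (k + 1)" "d < trib (k + 2)"
    using tsum_lt_trib[of k] strict_monoD[OF strict_mono_trib, of "k + 1" "k + 2"] by simp_all
  then have "lcp (j + l) = lcp d"
    using lcp_bound[OF d(1), of "k + 2"] lcp_trib_add[OF d(1), of "k + 3"] d(2) tsum
      trib_pos[of "k + 2"]
    by simp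
  then have lcp_d: "n \<le> trib (k + 3) + d + lcp d"
    using sq(3) d(2) by simp
  have "\<not> d < trib k"
  proof
    assume "d < trib k"
    then have "d + lcp d \<le> tsum k"
      by (rule lcp_bound[OF d(1)])
    with lcp_d n tsum(1) show False
      by linarith
  qed
  moreover have "lcp d \<le> tsum k"
    using lcp_le_tsum[OF d(1)] d_small by simp
  moreover have "j = trib (k + 2) \<or> j = trib (k + 2) + trib (k + 1)"
    using lcp_reach_cases[OF j] reach_j calculation(1) by simp
  ultimately show False
    using lcp_d sq(2) d(2) trib_rec[of k] tsum_lt_trib[of k] tsum_lt_double[of k]
    by (elim disjE) linarith+
qed

lemma new_square_second_half:
  assumes n: "tsum (k + 3) < n" "n \<le> tsum (k + 4)"
    and sq: "1 \<le> l" "j + 2 * l \<le> n" "prefix_occ (j + l) (n - (j + l))" "prefix_occ j (n - (j + l))"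
    and fresh: "n < 2 * l + trib (k + 3)"
  shows "j + l = trib (k + 3)"
proof -
  have "1 \<le> j + l"
    using sq(1) by simp
  then have reach: "n \<le> j + l + lcp (j + l)"
    using sq(3) prefix_occ_iff_le_lcp by simp
  then have "trib (k + 3) \<le> j + l"
    using lcp_bound[of "j + l" "k + 3"] n(1) \<open>1 \<le> j + l\<close> by linarith
  moreover have "\<not> trib (k + 3) < j + l"
  proof
    assume past: "trib (k + 3) < j + l"
    show False
    proof (cases "j = 0")
      case True
      then show False
        using no_square_prefix_past_block[OF n] sq(2) reach past by simp
    next
      case False
      then have j: "1 \<le> j"
        by simp
      then have "n - (j + l) \<le> lcp j"
        using sq(4) prefix_occ_iff_le_lcp by simp
      then show False
        using no_new_square_past_block[OF n(1) j sq(2) reach _ fresh past] by simp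
    qed
  qed
  ultimately show ?thesis
    by simp
qed

lemma new_square_length:
  assumes n: "tsum (k + 3) < n" "n \<le> tsum (k + 4)"
    and sq: "1 \<le> l" "j + 2 * l \<le> n" "prefix_occ j (n - (j + l))"
    and fresh: "n < 2 * l + trib (k + 3)"
    and half: "j + l = trib (k + 3)"
  shows "l \<in> block_square_lengths k n"
proof (cases "j = 0")
  case True
  then show ?thesis
    using sq(2) half by (simp add: block_square_lengths_def)
next
  case False
  then have j: "1 \<le> j" "j < trib (k + 3)"
    using sq(1) half by simp_all
  have "n - trib (k + 3) \<le> lcp j"
    using sq(3) prefix_occ_iff_le_lcp[OF j(1)] half by simp
  moreover have "tsum k < n - trib (k + 3)"
    using n(1) tsum_rec[of k] by simp
  ultimately have "j = trib (k + 1) \<or> j = trib (k + 2) \<or> j = trib (k + 2) + trib (k + 1)"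
    using lcp_gt_tsum_cases[OF j] by simp
  moreover have "j \<noteq> trib (k + 1)"
  proof
    assume "j = trib (k + 1)"
    then have "n \<le> trib (k + 3) + tsum (k + 1)"
      using \<open>n - trib (k + 3) \<le> lcp j\<close> lcp_trib[of "k + 1"] by simp
    then show False
      using sq(2) half \<open>j = trib (k + 1)\<close> trib_rec[of k] tsum_lt_trib[of "k + 1"] by simp
  qed
  ultimately show ?thesis
    using \<open>n - trib (k + 3) \<le> lcp j\<close> sq(2) fresh half trib_rec[of k] lcp_trib[of "k + 2"]
    by (auto simp: block_square_lengths_def)
qed

lemma block_square_length_is_new:
  assumes n: "tsum (k + 3) < n" "n \<le> tsum (k + 4)" and l: "l \<in> block_square_lengths k n"
  shows "1 \<le> l \<and> 2 * l \<le> n \<and> square_suffix n l \<and> n < 2 * l + trib (k + 3)"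
proof -
  have tsum: "tsum (k + 3) = trib (k + 3) + tsum k" "tsum (k + 4) = tsum (k + 3) + trib (k + 3)"
    "tsum (k + 2) = tsum (k + 1) + trib (k + 1)" "tsum (k + 1) = tsum k + trib k"
    by (rule tsum_rec) (simp_all add: tsum_Suc numeral_eq_Suc)
  have occ_block: "prefix_occ (trib (k + 3)) (n - trib (k + 3))"
    using prefix_occ_iff_le_lcp[of "trib (k + 3)"] trib_pos[of "k + 3"] lcp_trib[of "k + 3"] n(2) tsum(2)
    by simp
  have pos: "1 \<le> l"
    using l trib_pos[of k] trib_pos[of "k + 3"] by (auto simp: block_square_lengths_def)
  moreover have "2 * l \<le> n"
    using l n(1) tsum(1) trib_le_tsum[of k] trib_rec[of k] by (auto simp: block_square_lengths_def)
  moreover have "\<exists>j. j + 2 * l \<le> n \<and> j + l = trib (k + 3) \<and> prefix_occ j (n - (j + l))"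
    using l unfolding block_square_lengths_def
  proof (elim CollectE disjE conjE)
    assume "l = trib (k + 3)" "2 * trib (k + 3) \<le> n"
    then show ?thesis
      by (intro exI[of _ 0]) simp
  next
    assume "l = trib k" "n < trib (k + 3) + 2 * trib k"
    moreover have "prefix_occ (trib (k + 2) + trib (k + 1)) (n - trib (k + 3))"
      using prefix_occ_iff_le_lcp[of "trib (k + 2) + trib (k + 1)"] trib_pos[of "k + 1"]
        lcp_trib_pair[of "k + 1"] calculation trib_le_tsum[of k] tsum
      by simp
    ultimately show ?thesis
      using n(1) tsum(1) trib_le_tsum[of k] trib_rec[of k]
      by (intro exI[of _ "trib (k + 2) + trib (k + 1)"]) simp
  next
    assume "l = trib (k + 1) + trib k" "2 * trib (k + 3) \<le> n + trib (k + 2)"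
      "n \<le> trib (k + 3) + tsum (k + 2)"
    moreover have "prefix_occ (trib (k + 2)) (n - trib (k + 3))"
      using prefix_occ_iff_le_lcp[of "trib (k + 2)"] trib_pos[of "k + 2"] lcp_trib[of "k + 2"]
        calculation
      by simp
    ultimately show ?thesis
      using trib_rec[of k] by (intro exI[of _ "trib (k + 2)"]) (simp add: add.assoc)
  qed
  then have "square_suffix n l"
    using square_suffix_iff[OF pos \<open>2 * l \<le> n\<close>] occ_block by auto
  moreover have "n < 2 * l + trib (k + 3)"
    using l n(2) tsum tsum_lt_trib[of k] tsum_lt_trib[of "k + 1"] trib_rec[of k]
    by (auto simp: block_square_lengths_def numeral_eq_Suc)
  ultimately show ?thesis
    by simp
qed

lemma square_lengths_eq:
  assumes "tsum (k + 3) < n" "n \<le> tsum (k + 4)"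
  shows "square_lengths n = block_square_lengths k n"
proof -
  have fresh: "fresh_suffix n (2 * l) \<longleftrightarrow> n < 2 * l + trib (k + 3)" if "2 * l \<le> n" for l
    using fresh_suffix_iff[of "k + 3" n "2 * l"] assms that by (simp add: numeral_eq_Suc)
  show ?thesis
  proof (intro set_eqI iffI)
    fix l
    assume "l \<in> square_lengths n"
    then have l: "1 \<le> l" "2 * l \<le> n" "square_suffix n l" "n < 2 * l + trib (k + 3)"
      using fresh by (auto simp: square_lengths_def)
    then obtain j where "j + 2 * l \<le> n" "prefix_occ (j + l) (n - (j + l))"
      "prefix_occ j (n - (j + l))"
      using square_suffix_iff by blast
    then show "l \<in> block_square_lengths k n"
      using new_square_length[OF assms l(1)] new_square_second_half[OF assms l(1)] l(4) by blast
  next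
    fix l
    assume "l \<in> block_square_lengths k n"
    then show "l \<in> square_lengths n"
      using block_square_length_is_new[OF assms] fresh by (auto simp: square_lengths_def)
  qed
qed

lemma card_guarded_eq_1_iff:
  assumes "\<not> (P \<and> Q)" "\<not> (P \<and> R)" "\<not> (Q \<and> R)"
  shows "card {l. l = a \<and> P \<or> l = b \<and> Q \<or> l = c \<and> R} = 1 \<longleftrightarrow> P \<or> Q \<or> R"
  using assms by (cases P; cases Q; cases R) auto

lemma acount_eq_1_iff:
  assumes "tsum (k + 3) < n" "n \<le> tsum (k + 4)"
  shows "acount n = 1 \<longleftrightarrow> 2 * trib (k + 3) \<le> n \<or> n < trib (k + 3) + 2 * trib k
    \<or> 2 * trib (k + 3) \<le> n + trib (k + 2) \<and> n \<le> trib (k + 3) + tsum (k + 2)"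
proof -
  have card: "acount n = card (block_square_lengths k n)"
    using acount_eq_card_square_lengths square_lengths_eq[OF assms] assms(1) by simp
  have "trib k \<le> trib (k + 1)"
    using strict_monoD[OF strict_mono_trib, of k "k + 1"] by simp
  moreover have "tsum (k + 2) < trib (k + 3)"
    using tsum_lt_trib[of "k + 2"] by (simp add: numeral_eq_Suc)
  ultimately show ?thesis
    unfolding card block_square_lengths_def using trib_rec[of k]
    by (intro card_guarded_eq_1_iff) linarith+
qed

lemma no_square_suffix_upto_7: "n \<le> 7 \<Longrightarrow> 1 \<le> l \<Longrightarrow> 2 * l \<le> n \<Longrightarrow> \<not> square_suffix n l"
proof
  assume n: "n \<le> 7" "1 \<le> l" "2 * l \<le> n" and sq: "square_suffix n l"
  have "tlet (n - 2 * l) = tlet (n - l)" "2 \<le> l \<Longrightarrow> tlet (n - 2 * l + 1) = tlet (n - l + 1)"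
    using spec[OF sq[unfolded square_suffix_def], of 0] spec[OF sq[unfolded square_suffix_def], of 1]
      n(2) by simp_all
  moreover have "l \<in> {1, 2, 3}" "n \<in> {2, 3, 4, 5, 6, 7}"
    using n by auto
  ultimately show False
    using n(3) by (auto simp: tlet_small)
qed

lemma acount_upto_7: "1 \<le> n \<Longrightarrow> n \<le> 7 \<Longrightarrow> acount n = 0"
proof -
  assume n: "1 \<le> n" "n \<le> 7"
  then have "square_lengths n = {}"
    using no_square_suffix_upto_7 by (auto simp: square_lengths_def)
  then show ?thesis
    using acount_eq_card_square_lengths[OF n(1)] by simp
qed

lemma acount_upto_13: "1 \<le> n \<Longrightarrow> n < 14 \<Longrightarrow> acount n = 1 \<longleftrightarrow> n \<in> {8, 10}"
proof (cases "n \<le> 7")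
  case False
  moreover assume "n < 14"
  ultimately have "n \<in> {8, 9, 10, 11, 12, 13}"
    by auto
  moreover have "tsum (Suc (Suc 0)) = 3"
    by (simp add: tsum_Suc)
  ultimately show ?thesis
    using acount_eq_1_iff[of 0 n] by (auto simp: tsum_small)
qed (simp add: acount_upto_7)

lemma acount_between_double_tribs:
  assumes "2 * trib (k + 3) \<le> n" "n < 2 * trib (k + 4)"
  shows "acount n = 1 \<longleftrightarrow>
    n \<in> {2 * trib (k + 3) .. trib (k + 4) + 2 * trib (k + 1) - 1}
      \<union> {2 * trib (k + 4) - trib (k + 3) .. (3 * trib (k + 4) + trib (k + 2) - 3) div 2}"
proof (cases "n \<le> tsum (k + 4)")
  case True
  moreover have "tsum (k + 3) < n"
    using assms(1) tsum_lt_double[of "k + 3"] by simp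
  moreover have "n \<le> trib (k + 4) + 2 * trib (k + 1) - 1"
    using True tsum_rec[of "k + 1"] tsum_lt_double[of "k + 1"] by (simp add: ac_simps)
  ultimately show ?thesis
    using acount_eq_1_iff[of k n] assms(1) by simp
next
  case False
  have "n \<le> tsum (k + 5)"
    using assms(2) trib_le_tsum[of "k + 4"] by (simp add: tsum_Suc numeral_eq_Suc)
  with False have "acount n = 1 \<longleftrightarrow> n < trib (k + 4) + 2 * trib (k + 1)
      \<or> 2 * trib (k + 4) \<le> n + trib (k + 3) \<and> n \<le> trib (k + 4) + tsum (k + 3)"
    using acount_eq_1_iff[of "k + 1" n] assms(2) by (simp add: ac_simps numeral_eq_Suc)
  moreover have "2 * tsum (k + 3) + 3 = trib (k + 4) + trib (k + 2)"
    using tsum_double[of "k + 1"] by (simp add: numeral_eq_Suc)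
  then have "(3 * trib (k + 4) + trib (k + 2) - 3) div 2 = trib (k + 4) + tsum (k + 3)"
    by linarith
  moreover have "trib (k + 3) \<le> trib (k + 4)"
    using strict_monoD[OF strict_mono_trib, of "k + 3" "k + 4"] by simp
  ultimately show ?thesis
    using assms(1) trib_pos[of "k + 1"] by auto
qed

theorem mainTheorem4:
  shows "(\<forall>n::nat. 1 \<le> n \<and> n < 14 \<longrightarrow> (acount n = 1 \<longleftrightarrow> n \<in> {8, 10}))
    \<and> (\<forall>n m::nat. 14 \<le> n \<and> 2 * trib (m - 1) \<le> n \<and> n < 2 * trib m \<longrightarrow>
          4 \<le> m \<and>
          (acount n = 1 \<longleftrightarrow>
             n \<in> {2 * trib (m - 1) .. trib m + 2 * trib (m - 3) - 1}
                 \<union> {2 * trib m - trib (m - 1) .. (3 * trib m + trib (m - 2) - 3) div 2}))"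
proof (intro conjI allI impI)
  fix n m :: nat
  assume n: "14 \<le> n \<and> 2 * trib (m - 1) \<le> n \<and> n < 2 * trib m"
  then have "trib 3 < trib m"
    by simp
  then show "4 \<le> m"
    using strict_mono_less[OF strict_mono_trib, of 3 m] by simp
  then obtain k where k: "m = k + 4"
    by (metis add.commute le_Suc_ex)
  then have "m - 1 = k + 3" "m - 2 = k + 2" "m - 3 = k + 1"
    by simp_all
  with n k show "acount n = 1 \<longleftrightarrow>
      n \<in> {2 * trib (m - 1) .. trib m + 2 * trib (m - 3) - 1}
        \<union> {2 * trib m - trib (m - 1) .. (3 * trib m + trib (m - 2) - 3) div 2}"
    using acount_between_double_tribs[of k n] by (simp add: ac_simps)
qed (use acount_upto_13 in blast)

end
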